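(* Let Q be a strong quasi-MV* algebra. Then there exist an MV*-algebra B and a flat strong quasi-MV* algebra F such that Q can be embedded into the direct product B × F. Such an embedding is an isomorphism if Q is an MV*-algebra or Q is a flat strong quasi-MV* algebra.
   Context: An MV*-algebra is an algebra ⟨B; ⊕, −, 0, 1⟩ of type ⟨2,1,0,0⟩ satisfying: x⊕y = y⊕x; (1⊕x)⊕(y⊕(1⊕z)) = ((1⊕x)⊕y)⊕(1⊕z); x⊕(−x) = 0; (x⊕1)⊕1 = 1; x⊕0 = x; −(x⊕y) = (−x)⊕(−y); −(−x) = x; x⊕y = (x⁺⊕y⁺)⊕(x⁻⊕y⁻); (−x⊕(x⊕y))⁺ = −(x⁺)⊕(x⁺⊕y⁺); x∨y = y∨x; x∨(y∨z) = (x∨y)∨z; x⊕(y∨z) = (x⊕y)∨(x⊕z); where x⁺ = 1⊕(−1⊕x), x⁻ = −1⊕(1⊕x), and x∨y = (x⁺⊕(−x⁺⊕y⁺)⁺)⊕(x⁻⊕(−x⁻⊕y⁻)⁺). A quasi-MV* algebra is an algebra ⟨A; ⊕, −, ⁺, ⁻, 0, 1⟩ of type ⟨2,1,1,1,0,0⟩ satisfying: x⊕y = y⊕x; (1⊕x)⊕(y⊕(1⊕z)) = ((1⊕x)⊕y)⊕(1⊕z); (x⊕1)⊕1 = 1; (x⊕y)⊕0 = x⊕y; x⁺⊕0 = (x⊕0)⁺ = 1⊕(−1⊕x) and x⁻⊕0 = (x⊕0)⁻ = −1⊕(1⊕x); x⊕y = (x⁺⊕y⁺)⊕(x⁻⊕y⁻);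 0 = −0; x⊕(−x) = 0; −(x⊕y) = (−x)⊕(−y); −(−x) = x; (−x⊕(x⊕y))⁺ = −x⁺⊕(x⁺⊕y⁺); x∨y = y∨x; x∨(y∨z) = (x∨y)∨z; x⊕(y∨z) = (x⊕y)∨(x⊕z); with x∨y = (x⁺⊕(−x⁺⊕y⁺)⁺)⊕(x⁻⊕(−x⁻⊕y⁻)⁺). A strong quasi-MV* algebra is a quasi-MV* algebra satisfying x⁺ = x⁺⊕0 and x⁻ = x⁻⊕0 for all x. It is flat if it satisfies 0 = 1. Direct products carry coordinatewise operations; an embedding is an injective map preserving 0, 1, ⊕ and − (hence also ⁺ and ⁻). *)

theory Defs
  imports Main
begin

text \<open>For MV*-algebras only the
fields qcarrier, add, neg, zero, one are used; the fields pos/negp are ignored and the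
operations x-plus, x-minus are the term operations of the MV*-algebra.\<close>

record 'a qmv =
  qcarrier :: "'a set"
  add :: "'a \<Rightarrow> 'a \<Rightarrow> 'a"
  neg :: "'a \<Rightarrow> 'a"
  pos :: "'a \<Rightarrow> 'a"
  negp :: "'a \<Rightarrow> 'a"
  zero :: 'a
  one :: 'a

definition tpos :: "('a, 'b) qmv_scheme \<Rightarrow> 'a \<Rightarrow> 'a" where
  "tpos A x = add A (one A) (add A (neg A (one A)) x)"

definition tneg :: "('a, 'b) qmv_scheme \<Rightarrow> 'a \<Rightarrow> 'a" where
  "tneg A x = add A (neg A (one A)) (add A (one A) x)"

definition join_with :: "('a, 'b) qmv_scheme \<Rightarrow> ('a \<Rightarrow> 'a) \<Rightarrow> ('a \<Rightarrow> 'a) \<Rightarrow> 'a \<Rightarrow> 'a \<Rightarrow> 'a" where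
  "join_with A p m x y =
     add A (add A (p x) (p (add A (neg A (p x)) (p y))))
           (add A (m x) (p (add A (neg A (m x)) (m y))))"

definition mv_star_algebra :: "('a, 'b) qmv_scheme \<Rightarrow> bool" where
  "mv_star_algebra A \<longleftrightarrow>
    (let C = qcarrier A; s = add A; n = neg A; z = zero A; u = one A;
         P = tpos A; M = tneg A; J = join_with A (tpos A) (tneg A) in
     z \<in> C \<and> u \<in> C \<and> (\<forall>x\<in>C. \<forall>y\<in>C. s x y \<in> C) \<and> (\<forall>x\<in>C. n x \<in> C) \<and>
     (\<forall>x\<in>C. \<forall>y\<in>C. s x y = s y x) \<and>
     (\<forall>x\<in>C. \<forall>y\<in>C. \<forall>w\<in>C. s (s u x) (s y (s u w)) = s (s (s u x) y) (s u w)) \<and>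
     (\<forall>x\<in>C. s x (n x) = z) \<and>
     (\<forall>x\<in>C. s (s x u) u = u) \<and>
     (\<forall>x\<in>C. s x z = x) \<and>
     (\<forall>x\<in>C. \<forall>y\<in>C. n (s x y) = s (n x) (n y)) \<and>
     (\<forall>x\<in>C. n (n x) = x) \<and>
     (\<forall>x\<in>C. \<forall>y\<in>C. s x y = s (s (P x) (P y)) (s (M x) (M y))) \<and>
     (\<forall>x\<in>C. \<forall>y\<in>C. P (s (n x) (s x y)) = s (n (P x)) (s (P x) (P y))) \<and>
     (\<forall>x\<in>C. \<forall>y\<in>C. J x y = J y x) \<and>
     (\<forall>x\<in>C. \<forall>y\<in>C. \<forall>w\<in>C. J x (J y w) = J (J x y) w) \<and>
     (\<forall>x\<in>C. \<forall>y\<in>C. \<forall>w\<in>C. s x (J y w) = J (s x y) (s x w)))"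

definition quasi_mv_star_algebra :: "('a, 'b) qmv_scheme \<Rightarrow> bool" where
  "quasi_mv_star_algebra A \<longleftrightarrow>
    (let C = qcarrier A; s = add A; n = neg A; z = zero A; u = one A;
         P = pos A; M = negp A; J = join_with A (pos A) (negp A) in
     z \<in> C \<and> u \<in> C \<and> (\<forall>x\<in>C. \<forall>y\<in>C. s x y \<in> C) \<and> (\<forall>x\<in>C. n x \<in> C) \<and>
     (\<forall>x\<in>C. P x \<in> C) \<and> (\<forall>x\<in>C. M x \<in> C) \<and>
     (\<forall>x\<in>C. \<forall>y\<in>C. s x y = s y x) \<and>
     (\<forall>x\<in>C. \<forall>y\<in>C. \<forall>w\<in>C. s (s u x) (s y (s u w)) = s (s (s u x) y) (s u w)) \<and>
     (\<forall>x\<in>C. s (s x u) u = u) \<and>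
     (\<forall>x\<in>C. \<forall>y\<in>C. s (s x y) z = s x y) \<and>
     (\<forall>x\<in>C. s (P x) z = P (s x z) \<and> P (s x z) = s u (s (n u) x)) \<and>
     (\<forall>x\<in>C. s (M x) z = M (s x z) \<and> M (s x z) = s (n u) (s u x)) \<and>
     (\<forall>x\<in>C. \<forall>y\<in>C. s x y = s (s (P x) (P y)) (s (M x) (M y))) \<and>
     z = n z \<and>
     (\<forall>x\<in>C. s x (n x) = z) \<and>
     (\<forall>x\<in>C. \<forall>y\<in>C. n (s x y) = s (n x) (n y)) \<and>
     (\<forall>x\<in>C. n (n x) = x) \<and>
     (\<forall>x\<in>C. \<forall>y\<in>C. P (s (n x) (s x y)) = s (n (P x)) (s (P x) (P y))) \<and>
     (\<forall>x\<in>C. \<forall>y\<in>C. J x y = J y x) \<and>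
     (\<forall>x\<in>C. \<forall>y\<in>C. \<forall>w\<in>C. J x (J y w) = J (J x y) w) \<and>
     (\<forall>x\<in>C. \<forall>y\<in>C. \<forall>w\<in>C. s x (J y w) = J (s x y) (s x w)))"

definition strong_qmv :: "('a, 'b) qmv_scheme \<Rightarrow> bool" where
  "strong_qmv A \<longleftrightarrow> quasi_mv_star_algebra A \<and>
     (\<forall>x\<in>qcarrier A. pos A x = add A (pos A x) (zero A) \<and>
                      negp A x = add A (negp A x) (zero A))"

definition flat_strong_qmv :: "('a, 'b) qmv_scheme \<Rightarrow> bool" where
  "flat_strong_qmv A \<longleftrightarrow> strong_qmv A \<and> zero A = one A"

definition prod_alg :: "('b, 'x) qmv_scheme \<Rightarrow> ('c, 'y) qmv_scheme \<Rightarrow> ('b \<times> 'c) qmv" where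
  "prod_alg B F =
    \<lparr> qcarrier = qcarrier B \<times> qcarrier F,
      add = (\<lambda>(a, b) (c, d). (add B a c, add F b d)),
      neg = (\<lambda>(a, b). (neg B a, neg F b)),
      pos = (\<lambda>(a, b). (tpos B a, pos F b)),
      negp = (\<lambda>(a, b). (tneg B a, negp F b)),
      zero = (zero B, zero F),
      one = (one B, one F) \<rparr>"

definition embedding :: "('a, 'x) qmv_scheme \<Rightarrow> ('c, 'y) qmv_scheme \<Rightarrow> ('a \<Rightarrow> 'c) \<Rightarrow> bool" where
  "embedding A D f \<longleftrightarrow>
     inj_on f (qcarrier A) \<and> f ` qcarrier A \<subseteq> qcarrier D \<and>
     f (zero A) = zero D \<and> f (one A) = one D \<and>
     (\<forall>x\<in>qcarrier A. \<forall>y\<in>qcarrier A. f (add A x y) = add D (f x) (f y)) \<and>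
     (\<forall>x\<in>qcarrier A. f (neg A x) = neg D (f x))"

end

theory Submission
  imports Defs
begin

text \<open>Every \<open>x\<close> splits into its regular part \<open>x \<oplus> 0\<close> and, when \<open>x \<oplus> 0 \<noteq> x\<close>, the
irregular element \<open>x\<close> itself, from which \<open>x\<close> is recovered. In any quasi-MV* algebra the
regular elements form an MV*-algebra, because on them \<open>pos\<close> and \<open>negp\<close> coincide with the
term operations \<open>x\<^sup>+\<close> and \<open>x\<^sup>-\<close>. A flat algebra carries no additive information (all sums
are \<open>0\<close>), so the irregular elements together with \<open>0\<close> form one under negation alone, which
preserves regularity. In a strong algebra \<open>x \<oplus> y = (x \<oplus> 0) \<oplus> (y \<oplus> 0)\<close>, hence addition
only sees the regular parts and the splitting is an embedding. It is onto when there are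
no irregular elements (MV*-algebras) or when \<open>0\<close> is the only regular element (flat algebras).\<close>

definition regular_elements :: "('a, 'b) qmv_scheme \<Rightarrow> 'a set" where
  "regular_elements Q = {x \<in> qcarrier Q. add Q x (zero Q) = x}"

text \<open>Both factors live on \<open>'a set\<close>: the regular part represents \<open>x\<close> by \<open>{x}\<close>, and the
flat part consists of the \<open>{x}\<close> for irregular \<open>x\<close> together with \<open>{}\<close> as its \<open>0 = 1\<close>.\<close>

definition regular_part :: "('a, 'b) qmv_scheme \<Rightarrow> 'a set qmv" where
  "regular_part Q =
    \<lparr> qcarrier = (\<lambda>x. {x}) ` regular_elements Q,
      add = (\<lambda>S T. {add Q (the_elem S) (the_elem T)}),
      neg = (\<lambda>S. {neg Q (the_elem S)}),
      pos = (\<lambda>S. S), negp = (\<lambda>S. S),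
      zero = {zero Q}, one = {one Q} \<rparr>"

definition flat_part :: "('a, 'b) qmv_scheme \<Rightarrow> 'a set qmv" where
  "flat_part Q =
    \<lparr> qcarrier = insert {} ((\<lambda>x. {x}) ` (qcarrier Q - regular_elements Q)),
      add = (\<lambda>S T. {}),
      neg = image (neg Q),
      pos = (\<lambda>S. {}), negp = (\<lambda>S. {}),
      zero = {}, one = {} \<rparr>"

definition decompose :: "('a, 'b) qmv_scheme \<Rightarrow> 'a \<Rightarrow> 'a set \<times> 'a set" where
  "decompose Q x =
     ({add Q x (zero Q)}, if add Q x (zero Q) = x then {} else {x})"

lemma regular_part_simps:
  "qcarrier (regular_part Q) = (\<lambda>x. {x}) ` regular_elements Q"
  "add (regular_part Q) {x} {y} = {add Q x y}"
  "neg (regular_part Q) {x} = {neg Q x}"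
  "zero (regular_part Q) = {zero Q}"
  "one (regular_part Q) = {one Q}"
  by (simp_all add: regular_part_def)

lemma tpos_regular_part: "tpos (regular_part Q) {x} = {tpos Q x}"
  by (simp add: tpos_def regular_part_simps)

lemma tneg_regular_part: "tneg (regular_part Q) {x} = {tneg Q x}"
  by (simp add: tneg_def regular_part_simps)

lemma join_regular_part:
  "join_with (regular_part Q) (tpos (regular_part Q)) (tneg (regular_part Q)) {x} {y} =
   {join_with Q (tpos Q) (tneg Q) x y}"
  by (simp add: join_with_def tpos_regular_part tneg_regular_part regular_part_simps)

locale quasi_mv_star =
  fixes Q :: "('a, 'b) qmv_scheme"
  assumes quasi_mv_star: "quasi_mv_star_algebra Q"
begin

abbreviation C where "C \<equiv> qcarrier Q"
abbreviation R where "R \<equiv> regular_elements Q"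
abbreviation plus (infixl "\<oplus>" 65) where "x \<oplus> y \<equiv> add Q x y"
abbreviation minus ("\<ominus> _" [80] 80) where "\<ominus> x \<equiv> neg Q x"
abbreviation zero_elem ("\<zero>") where "\<zero> \<equiv> zero Q"
abbreviation one_elem ("\<one>") where "\<one> \<equiv> one Q"
abbreviation P where "P \<equiv> pos Q"
abbreviation M where "M \<equiv> negp Q"

lemma zero_closed: "\<zero> \<in> C"
  and one_closed: "\<one> \<in> C"
  and add_closed: "x \<in> C \<Longrightarrow> y \<in> C \<Longrightarrow> x \<oplus> y \<in> C"
  and neg_closed: "x \<in> C \<Longrightarrow> \<ominus> x \<in> C"
  and pos_closed: "x \<in> C \<Longrightarrow> P x \<in> C"
  and negp_closed: "x \<in> C \<Longrightarrow> M x \<in> C"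
  and add_commute: "x \<in> C \<Longrightarrow> y \<in> C \<Longrightarrow> x \<oplus> y = y \<oplus> x"
  and add_one_assoc: "x \<in> C \<Longrightarrow> y \<in> C \<Longrightarrow> w \<in> C \<Longrightarrow>
         (\<one> \<oplus> x) \<oplus> (y \<oplus> (\<one> \<oplus> w)) = ((\<one> \<oplus> x) \<oplus> y) \<oplus> (\<one> \<oplus> w)"
  and add_one_one: "x \<in> C \<Longrightarrow> (x \<oplus> \<one>) \<oplus> \<one> = \<one>"
  and sum_add_zero: "x \<in> C \<Longrightarrow> y \<in> C \<Longrightarrow> (x \<oplus> y) \<oplus> \<zero> = x \<oplus> y"
  and pos_add_zero: "x \<in> C \<Longrightarrow> P x \<oplus> \<zero> = P (x \<oplus> \<zero>)"
  and pos_add_zero_eq_tpos: "x \<in> C \<Longrightarrow> P (x \<oplus> \<zero>) = tpos Q x"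
  and negp_add_zero: "x \<in> C \<Longrightarrow> M x \<oplus> \<zero> = M (x \<oplus> \<zero>)"
  and negp_add_zero_eq_tneg: "x \<in> C \<Longrightarrow> M (x \<oplus> \<zero>) = tneg Q x"
  and add_pos_negp: "x \<in> C \<Longrightarrow> y \<in> C \<Longrightarrow> x \<oplus> y = (P x \<oplus> P y) \<oplus> (M x \<oplus> M y)"
  and neg_zero: "\<ominus> \<zero> = \<zero>"
  and add_neg: "x \<in> C \<Longrightarrow> x \<oplus> \<ominus> x = \<zero>"
  and neg_add: "x \<in> C \<Longrightarrow> y \<in> C \<Longrightarrow> \<ominus> (x \<oplus> y) = \<ominus> x \<oplus> \<ominus> y"
  and neg_neg: "x \<in> C \<Longrightarrow> \<ominus> \<ominus> x = x"
  and pos_neg_add: "x \<in> C \<Longrightarrow> y \<in> C \<Longrightarrow> P (\<ominus> x \<oplus> (x \<oplus> y)) = \<ominus> P x \<oplus> (P x \<oplus> P y)"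
  and join_commute: "x \<in> C \<Longrightarrow> y \<in> C \<Longrightarrow> join_with Q P M x y = join_with Q P M y x"
  and join_assoc: "x \<in> C \<Longrightarrow> y \<in> C \<Longrightarrow> w \<in> C \<Longrightarrow>
         join_with Q P M x (join_with Q P M y w) = join_with Q P M (join_with Q P M x y) w"
  and add_join_distrib: "x \<in> C \<Longrightarrow> y \<in> C \<Longrightarrow> w \<in> C \<Longrightarrow>
         x \<oplus> join_with Q P M y w = join_with Q P M (x \<oplus> y) (x \<oplus> w)"
  using quasi_mv_star unfolding quasi_mv_star_algebra_def Let_def tpos_def tneg_def
  by (blast | metis)+

lemma zero_add_zero: "\<zero> \<oplus> \<zero> = \<zero>"
  using add_neg[OF zero_closed] by (simp add: neg_zero)

lemma one_add_zero: "\<one> \<oplus> \<zero> = \<one>"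
proof -
  have "\<one> \<oplus> \<zero> = ((\<zero> \<oplus> \<one>) \<oplus> \<one>) \<oplus> \<zero>"
    by (simp add: add_one_one zero_closed)
  also have "\<dots> = (\<zero> \<oplus> \<one>) \<oplus> \<one>"
    by (simp add: sum_add_zero add_closed zero_closed one_closed)
  finally show ?thesis
    by (simp add: add_one_one zero_closed)
qed

lemma neg_add_zero: "x \<in> C \<Longrightarrow> \<ominus> x \<oplus> \<zero> = \<ominus> (x \<oplus> \<zero>)"
  by (simp add: neg_add zero_closed neg_zero)

lemma regular_elementsI: "x \<in> C \<Longrightarrow> x \<oplus> \<zero> = x \<Longrightarrow> x \<in> R"
  and regular_elementsD: "x \<in> R \<Longrightarrow> x \<in> C" "x \<in> R \<Longrightarrow> x \<oplus> \<zero> = x"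
  by (simp_all add: regular_elements_def)

lemma add_regular: "x \<in> C \<Longrightarrow> y \<in> C \<Longrightarrow> x \<oplus> y \<in> R"
  by (simp add: regular_elementsI add_closed sum_add_zero)

lemma add_zero_regular: "x \<in> C \<Longrightarrow> x \<oplus> \<zero> \<in> R"
  by (simp add: add_regular zero_closed)

lemma zero_regular: "\<zero> \<in> R"
  by (simp add: regular_elementsI zero_closed zero_add_zero)

lemma one_regular: "\<one> \<in> R"
  by (simp add: regular_elementsI one_closed one_add_zero)

lemma neg_regular_iff:
  assumes "x \<in> C"
  shows "\<ominus> x \<in> R \<longleftrightarrow> x \<in> R"
proof -
  have "\<ominus> x \<oplus> \<zero> = \<ominus> x \<longleftrightarrow> x \<oplus> \<zero> = x"
    using assms neg_neg add_closed zero_closed neg_add_zero by metis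
  then show ?thesis
    using assms neg_closed by (simp add: regular_elements_def)
qed

lemma regular_pos_eq_tpos: "x \<in> R \<Longrightarrow> P x = tpos Q x"
  and regular_negp_eq_tneg: "x \<in> R \<Longrightarrow> M x = tneg Q x"
  using pos_add_zero_eq_tpos negp_add_zero_eq_tneg by (metis regular_elementsD)+

lemma regular_join_eq_tjoin:
  assumes "x \<in> R" "y \<in> R"
  shows "join_with Q P M x y = join_with Q (tpos Q) (tneg Q) x y"
proof -
  have C: "x \<in> C" "y \<in> C"
    using assms by (simp_all add: regular_elementsD)
  have "P (\<ominus> P x \<oplus> P y) = tpos Q (\<ominus> P x \<oplus> P y)"
    "P (\<ominus> M x \<oplus> M y) = tpos Q (\<ominus> M x \<oplus> M y)"
    by (simp_all add: regular_pos_eq_tpos add_regular neg_closed pos_closed negp_closed C)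
  then show ?thesis
    using assms by (simp add: join_with_def regular_pos_eq_tpos regular_negp_eq_tneg)
qed

lemma join_regular:
  "x \<in> C \<Longrightarrow> y \<in> C \<Longrightarrow> join_with Q P M x y \<in> R"
  by (simp add: join_with_def add_regular add_closed neg_closed pos_closed negp_closed)

lemma regular_add_tpos_tneg:
  "x \<in> R \<Longrightarrow> y \<in> R \<Longrightarrow> x \<oplus> y = (tpos Q x \<oplus> tpos Q y) \<oplus> (tneg Q x \<oplus> tneg Q y)"
  using add_pos_negp
  by (simp add: regular_elementsD flip: regular_pos_eq_tpos regular_negp_eq_tneg)

lemma regular_tpos_neg_add:
  "x \<in> R \<Longrightarrow> y \<in> R \<Longrightarrow>
     tpos Q (\<ominus> x \<oplus> (x \<oplus> y)) = \<ominus> tpos Q x \<oplus> (tpos Q x \<oplus> tpos Q y)"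
  using pos_neg_add
  by (simp add: regular_elementsD add_regular add_closed neg_closed flip: regular_pos_eq_tpos)

lemma regular_join_commute:
  "x \<in> R \<Longrightarrow> y \<in> R \<Longrightarrow>
     join_with Q (tpos Q) (tneg Q) x y = join_with Q (tpos Q) (tneg Q) y x"
  using join_commute by (simp add: regular_elementsD flip: regular_join_eq_tjoin)

lemma regular_join_assoc:
  "x \<in> R \<Longrightarrow> y \<in> R \<Longrightarrow> w \<in> R \<Longrightarrow>
     join_with Q (tpos Q) (tneg Q) x (join_with Q (tpos Q) (tneg Q) y w) =
     join_with Q (tpos Q) (tneg Q) (join_with Q (tpos Q) (tneg Q) x y) w"
  using join_assoc
  by (simp add: regular_elementsD join_regular flip: regular_join_eq_tjoin)

lemma regular_add_join_distrib:
  "x \<in> R \<Longrightarrow> y \<in> R \<Longrightarrow> w \<in> R \<Longrightarrow>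
     x \<oplus> join_with Q (tpos Q) (tneg Q) y w =
     join_with Q (tpos Q) (tneg Q) (x \<oplus> y) (x \<oplus> w)"
  using add_join_distrib
  by (simp add: regular_elementsD add_regular flip: regular_join_eq_tjoin)

lemma mv_star_algebra_regular_part: "mv_star_algebra (regular_part Q)"
  unfolding mv_star_algebra_def Let_def regular_part_simps Ball_image_comp comp_def
    tpos_regular_part tneg_regular_part join_regular_part
  by (simp add: zero_regular one_regular add_regular neg_regular_iff regular_elementsD
      add_one_assoc add_neg add_one_one neg_add neg_neg
      regular_tpos_neg_add regular_join_commute regular_join_assoc regular_add_join_distrib)
    (meson add_commute regular_elementsD(1) regular_add_tpos_tneg)

lemma flat_strong_qmv_flat_part: "flat_strong_qmv (flat_part Q)"
  unfolding flat_strong_qmv_def strong_qmv_def quasi_mv_star_algebra_def Let_def join_with_def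
    flat_part_def
  using neg_regular_iff neg_closed neg_neg by (auto simp: image_image)

lemma decompose_in_carrier:
  assumes "x \<in> C"
  shows "decompose Q x \<in> qcarrier (prod_alg (regular_part Q) (flat_part Q))"
proof -
  have "{x \<oplus> \<zero>} \<in> qcarrier (regular_part Q)"
    using add_zero_regular[OF assms] by (simp add: regular_part_simps)
  moreover have "(if x \<oplus> \<zero> = x then {} else {x}) \<in> qcarrier (flat_part Q)"
    using assms by (auto simp: flat_part_def dest: regular_elementsD)
  ultimately show ?thesis
    by (simp add: decompose_def prod_alg_def)
qed

lemma inj_on_decompose: "inj_on (decompose Q) C"
  by (rule inj_onI) (auto simp: decompose_def split: if_splits)

lemma decompose_onto_if_all_regular:
  assumes "C \<subseteq> R"
  shows "decompose Q ` C = qcarrier (prod_alg (regular_part Q) (flat_part Q))"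
proof -
  have R: "R = C"
    using assms by (auto dest: regular_elementsD)
  have "decompose Q x = ({x}, {})" if "x \<in> C" for x
    using that by (simp add: decompose_def R[symmetric] regular_elementsD)
  then show ?thesis
    by (force simp: prod_alg_def regular_part_simps flat_part_def R)
qed

lemma decompose_onto_if_zero_eq_one:
  assumes "\<zero> = \<one>"
  shows "decompose Q ` C = qcarrier (prod_alg (regular_part Q) (flat_part Q))"
proof -
  have add_zero: "x \<oplus> \<zero> = \<zero>" if "x \<in> C" for x
    using add_one_one[OF that] sum_add_zero[OF that zero_closed] assms by simp
  then have "R = {\<zero>}"
    using zero_regular by (auto simp: regular_elements_def)
  then have carrier: "qcarrier (prod_alg (regular_part Q) (flat_part Q)) =
                      {{\<zero>}} \<times> insert {} ((\<lambda>x. {x}) ` (C - {\<zero>}))"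
    by (simp add: prod_alg_def regular_part_simps flat_part_def)
  have decompose: "decompose Q x = ({\<zero>}, if x = \<zero> then {} else {x})" if "x \<in> C" for x
    using add_zero[OF that] by (auto simp: decompose_def)
  show ?thesis
    unfolding carrier
  proof
    show "decompose Q ` C \<subseteq> {{\<zero>}} \<times> insert {} ((\<lambda>x. {x}) ` (C - {\<zero>}))"
      by (auto simp: decompose split: if_splits)
    show "{{\<zero>}} \<times> insert {} ((\<lambda>x. {x}) ` (C - {\<zero>})) \<subseteq> decompose Q ` C"
    proof
      fix p assume "p \<in> {{\<zero>}} \<times> insert {} ((\<lambda>x. {x}) ` (C - {\<zero>}))"
      then consider "p = decompose Q \<zero>" | x where "x \<in> C" "p = decompose Q x"
        using decompose zero_closed by fastforce
      then show "p \<in> decompose Q ` C"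
        by cases (auto intro: zero_closed)
    qed
  qed
qed

end

lemma regular_elements_mv_star: "mv_star_algebra Q \<Longrightarrow> regular_elements Q = qcarrier Q"
  by (auto simp: mv_star_algebra_def Let_def regular_elements_def)

locale strong_quasi_mv_star =
  fixes Q :: "('a, 'b) qmv_scheme"
  assumes strong: "strong_qmv Q"

sublocale strong_quasi_mv_star \<subseteq> quasi_mv_star
  using strong by unfold_locales (simp add: strong_qmv_def)

context strong_quasi_mv_star
begin

lemma pos_add_zero_eq_pos: "x \<in> C \<Longrightarrow> P (x \<oplus> \<zero>) = P x"
  and negp_add_zero_eq_negp: "x \<in> C \<Longrightarrow> M (x \<oplus> \<zero>) = M x"
  using strong pos_add_zero negp_add_zero by (simp_all add: strong_qmv_def)

lemma add_zero_add_add_zero: "x \<in> C \<Longrightarrow> y \<in> C \<Longrightarrow> (x \<oplus> \<zero>) \<oplus> (y \<oplus> \<zero>) = x \<oplus> y"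
  using add_pos_negp add_closed zero_closed pos_add_zero_eq_pos negp_add_zero_eq_negp by metis

lemma embedding_decompose: "embedding Q (prod_alg (regular_part Q) (flat_part Q)) (decompose Q)"
  unfolding embedding_def
proof (intro conjI ballI)
  show "inj_on (decompose Q) C"
    by (rule inj_on_decompose)
  show "decompose Q ` C \<subseteq> qcarrier (prod_alg (regular_part Q) (flat_part Q))"
    using decompose_in_carrier by blast
  show "decompose Q \<zero> = zero (prod_alg (regular_part Q) (flat_part Q))"
    by (simp add: decompose_def prod_alg_def regular_part_simps flat_part_def zero_add_zero)
  show "decompose Q \<one> = one (prod_alg (regular_part Q) (flat_part Q))"
    by (simp add: decompose_def prod_alg_def regular_part_simps flat_part_def one_add_zero)
  fix x assume x: "x \<in> C"
  show "decompose Q (x \<oplus> y) =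
        add (prod_alg (regular_part Q) (flat_part Q)) (decompose Q x) (decompose Q y)"
    if "y \<in> C" for y
    using x that
    by (simp add: decompose_def prod_alg_def regular_part_simps flat_part_def sum_add_zero
        add_zero_add_add_zero)
  have "\<ominus> x \<oplus> \<zero> = \<ominus> x \<longleftrightarrow> x \<oplus> \<zero> = x"
    using neg_regular_iff[OF x] x neg_closed by (simp add: regular_elements_def)
  then show "decompose Q (\<ominus> x) = neg (prod_alg (regular_part Q) (flat_part Q)) (decompose Q x)"
    using x by (simp add: decompose_def prod_alg_def regular_part_simps flat_part_def neg_add_zero)
qed

end

theorem proposition3p1:
  fixes Q :: "'a qmv"
  assumes "strong_qmv Q"
  shows "\<exists>(B :: 'a set qmv) (F :: 'a set qmv) (f :: 'a \<Rightarrow> 'a set \<times> 'a set).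
           mv_star_algebra B \<and> flat_strong_qmv F \<and>
           embedding Q (prod_alg B F) f \<and>
           ((mv_star_algebra Q \<or> flat_strong_qmv Q) \<longrightarrow>
              f ` qcarrier Q = qcarrier (prod_alg B F))"
proof -
  interpret strong_quasi_mv_star Q
    using assms by unfold_locales
  have "decompose Q ` C = qcarrier (prod_alg (regular_part Q) (flat_part Q))"
    if "mv_star_algebra Q \<or> flat_strong_qmv Q"
    using that
  proof
    assume "mv_star_algebra Q"
    then show ?thesis
      by (intro decompose_onto_if_all_regular) (simp add: regular_elements_mv_star)
  next
    assume "flat_strong_qmv Q"
    then show ?thesis
      by (intro decompose_onto_if_zero_eq_one) (simp add: flat_strong_qmv_def)
  qed
  then show ?thesis
    using mv_star_algebra_regular_part flat_strong_qmv_flat_part embedding_decompose by blast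
qed

end
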